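(* Let $T,\widehat T\in\mathbb R^{d\times k}$ with $T$ of full column rank. Let $q,p,\widehat q,\widehat p\in\mathbb R^d$ and let $\theta\in\mathbb R^k$ satisfy $T\theta=q-p$ and $\|\theta\|\le\theta_{\max}$. Let $\Delta_T,\Delta_p,\Delta_q\ge0$ satisfy $\|\widehat T-T\|\le\Delta_T$, $\|\widehat p-p\|\le\Delta_p$, $\|\widehat q-q\|\le\Delta_q$. If $\widehat\theta$ is any minimizer over $\theta'\in\mathbb R^k$ of $$\|\widehat T\theta'-\widehat q+\widehat p\|+\Delta_T\|\theta'\|,$$ then $$\|\widehat\theta-\theta\|\le 2\|T^\dagger\|\big(\Delta_q+\Delta_p+\theta_{\max}\Delta_T\big).$$
   Context: Vector norms are Euclidean norms and matrix norms are spectral (operator) norms. $T^\dagger$ denotes the Moore–Penrose pseudoinverse; for full-column-rank $T$, $\|T^\dagger\|$ is the inverse of the smallest singular value of $T$. *)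

theory Defs
  imports "HOL-Analysis.Analysis"
begin

text \<open>Spectral (operator) norm of a real matrix, induced by the Euclidean vector norm.
  (Note: the built-in norm on real^'n^'m is the Frobenius norm, so we use onorm.)\<close>
definition spec_norm :: "real^'n^'m \<Rightarrow> real" where
  "spec_norm A = onorm (\<lambda>x. A *v x)"

definition is_pinv :: "real^'n^'m \<Rightarrow> real^'m^'n \<Rightarrow> bool" where
  "is_pinv A X \<longleftrightarrow> A ** X ** A = A \<and> X ** A ** X = X \<and>
     transpose (A ** X) = A ** X \<and> transpose (X ** A) = X ** A"

definition pinv :: "real^'n^'m \<Rightarrow> real^'m^'n" where
  "pinv A = (THE X. is_pinv A X)"

end

theory Submission
  imports Defs
begin

text \<open>Write \<open>r v = \<widehat>T v - \<widehat>q + \<widehat>p\<close>. Up to an error of at most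
  \<open>\<Delta>\<^sub>T \<parallel>v\<parallel> + \<Delta>\<^sub>q + \<Delta>\<^sub>p\<close>, \<open>r v\<close> equals \<open>T (v - \<theta>)\<close>. Comparing the penalized
  objective at the minimizer \<open>\<widehat>\<theta>\<close> with its value at \<open>\<theta>\<close> therefore bounds
  \<open>\<parallel>T (\<widehat>\<theta> - \<theta>)\<parallel>\<close> by twice that error at \<open>\<theta>\<close>, and since \<open>T\<close> has full column rank,
  \<open>T\<^sup>\<dagger> T = I\<close> converts this into a bound on \<open>\<parallel>\<widehat>\<theta> - \<theta>\<parallel>\<close>.\<close>

lemma is_pinv_unique:
  fixes A :: "real^'n^'m" and X Y :: "real^'m^'n"
  assumes X: "is_pinv A X" and Y: "is_pinv A Y"
  shows "X = Y"
proof -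
  have x1: "A ** X ** A = A" and x2: "X ** A ** X = X" and x3: "transpose (A ** X) = A ** X"
    and x4: "transpose (X ** A) = X ** A" using X by (auto simp: is_pinv_def)
  have y1: "A ** Y ** A = A" and y2: "Y ** A ** Y = Y" and y3: "transpose (A ** Y) = A ** Y"
    and y4: "transpose (Y ** A) = Y ** A" using Y by (auto simp: is_pinv_def)
  have AX_eq_AY: "A ** X = A ** Y"
  proof -
    have "A ** X = (A ** Y) ** (A ** X)" using y1 by (metis matrix_mul_assoc)
    also have "\<dots> = transpose ((A ** X) ** (A ** Y))"
      using x3 y3 by (simp add: matrix_transpose_mul)
    also have "(A ** X) ** (A ** Y) = A ** Y" using x1 by (metis matrix_mul_assoc)
    finally show ?thesis using y3 by simp
  qed
  have XA_eq_YA: "X ** A = Y ** A"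
  proof -
    have "X ** A = (X ** A) ** (Y ** A)" using y1 by (metis matrix_mul_assoc)
    also have "\<dots> = transpose ((Y ** A) ** (X ** A))"
      using x4 y4 by (simp add: matrix_transpose_mul)
    also have "(Y ** A) ** (X ** A) = Y ** A" using x1 by (metis matrix_mul_assoc)
    finally show ?thesis using y4 by simp
  qed
  have "X = X ** (A ** X)" using x2 by (simp add: matrix_mul_assoc)
  also have "\<dots> = (Y ** A) ** Y" using AX_eq_AY XA_eq_YA by (simp add: matrix_mul_assoc)
  also have "\<dots> = Y" using y2 .
  finally show ?thesis .
qed

lemma pinv_eqI: "is_pinv A X \<Longrightarrow> pinv A = X"
  unfolding pinv_def using is_pinv_unique by blast

lemma gram_matrix_injective:
  fixes A :: "real^'n^'m"
  assumes "inj ((*v) A)"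
  shows "inj ((*v) (transpose A ** A))"
proof -
  have "x = 0" if "(transpose A ** A) *v x = 0" for x
  proof -
    have "(A *v x) \<bullet> (A *v x) = (transpose A *v (A *v x)) \<bullet> x"
      by (metis dot_lmul_matrix transpose_matrix_vector)
    also have "\<dots> = 0" using that by (simp add: matrix_vector_mul_assoc)
    finally have "A *v x = A *v 0" by simp
    with assms show "x = 0" by (meson injD)
  qed
  then show ?thesis by (simp add: vec.inj_iff_eq_0)
qed

lemma is_pinv_gram_left_inverse:
  fixes A :: "real^'n^'m"
  assumes B: "B ** (transpose A ** A) = mat 1"
  shows "is_pinv A (B ** transpose A)" and "B ** transpose A ** A = mat 1"
proof -
  let ?G = "transpose A ** A"
  have G_sym: "transpose ?G = ?G" by (simp add: matrix_transpose_mul)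
  have B_right: "?G ** B = mat 1" using B matrix_left_right_inverse by blast
  then have "transpose B ** ?G = mat 1"
    using arg_cong[of _ _ transpose] G_sym by (metis matrix_transpose_mul transpose_mat)
  then have B_sym: "transpose B = B"
    using B_right by (metis matrix_mul_assoc matrix_mul_lid matrix_mul_rid)
  show "B ** transpose A ** A = mat 1" using B by (simp add: matrix_mul_assoc)
  then show "is_pinv A (B ** transpose A)"
    unfolding is_pinv_def
    by (metis B_sym matrix_mul_assoc matrix_mul_lid matrix_mul_rid matrix_transpose_mul
        transpose_transpose)
qed

lemma pinv_mult_self:
  fixes A :: "real^'n^'m"
  assumes "inj ((*v) A)"
  shows "pinv A ** A = mat 1"
proof -
  obtain B where "B ** (transpose A ** A) = mat 1"
    using gram_matrix_injective[OF assms] matrix_left_invertible_injective by blast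
  then show ?thesis using is_pinv_gram_left_inverse pinv_eqI by metis
qed

lemma norm_matrix_vector_le_spec_norm: "norm (A *v x) \<le> spec_norm A * norm x"
  unfolding spec_norm_def by (rule onorm) simp

lemma spec_norm_nonneg: "spec_norm A \<ge> 0"
  unfolding spec_norm_def by (rule onorm_pos_le) simp

lemma norm_le_spec_norm_pinv_mult:
  fixes A :: "real^'n^'m"
  assumes "inj ((*v) A)"
  shows "norm x \<le> spec_norm (pinv A) * norm (A *v x)"
  using norm_matrix_vector_le_spec_norm[of "pinv A" "A *v x"]
  by (simp add: matrix_vector_mul_assoc pinv_mult_self[OF assms])

lemma penalized_minimizer_error:
  fixes r :: "'a::real_normed_vector \<Rightarrow> 'b::real_normed_vector"
  assumes "linear L"
    and approx: "\<And>v. norm (r v - L (v - \<theta>)) \<le> a * norm v + c"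
    and minimal: "norm (r \<theta>') + a * norm \<theta>' \<le> norm (r \<theta>) + a * norm \<theta>"
  shows "norm (L (\<theta>' - \<theta>)) \<le> 2 * (a * norm \<theta> + c)"
proof -
  have "norm (L (\<theta>' - \<theta>)) \<le> norm (r \<theta>') + norm (r \<theta>' - L (\<theta>' - \<theta>))"
    by (metis norm_minus_commute norm_triangle_sub)
  also have "\<dots> \<le> norm (r \<theta>) + a * norm \<theta> + c"
    using approx[of \<theta>'] minimal by linarith
  also have "norm (r \<theta>) \<le> a * norm \<theta> + c"
    using approx[of \<theta>] linear_0[OF \<open>linear L\<close>] by simp
  finally show ?thesis by simp
qed

lemma perturbed_residual_bound:
  fixes T That :: "real^'k^'d"
  assumes "T *v \<theta> = q - p"
    and "spec_norm (That - T) \<le> \<Delta>T"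
    and "norm (ph - p) \<le> \<Delta>p"
    and "norm (qh - q) \<le> \<Delta>q"
  shows "norm ((That *v v - qh + ph) - T *v (v - \<theta>)) \<le> \<Delta>T * norm v + (\<Delta>q + \<Delta>p)"
proof -
  have residual: "(That *v v - qh + ph) - T *v (v - \<theta>) = (That - T) *v v - (qh - q) + (ph - p)"
    using assms(1)
    by (simp add: matrix_vector_mult_diff_distrib matrix_vector_mult_diff_rdistrib algebra_simps)
  have "norm ((That - T) *v v) \<le> \<Delta>T * norm v"
    using norm_matrix_vector_le_spec_norm[of "That - T" v] assms(2)
    by (meson mult_right_mono norm_ge_zero order_trans)
  then show ?thesis
    unfolding residual using assms(3,4) norm_triangle_ineq[of "(That - T) *v v - (qh - q)" "ph - p"]
      norm_triangle_ineq4[of "(That - T) *v v" "qh - q"] by linarith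
qed

theorem lemma3:
  fixes T That :: "real^'k^'d"
    and q p qh ph :: "real^'d"
    and \<theta> \<theta>h :: "real^'k"
    and \<theta>max \<Delta>T \<Delta>p \<Delta>q :: real
  assumes full_rank: "rank T = CARD('k)"
    and eq: "T *v \<theta> = q - p"
    and theta_bound: "norm \<theta> \<le> \<theta>max"
    and "\<Delta>T \<ge> 0" and "\<Delta>p \<ge> 0" and "\<Delta>q \<ge> 0"
    and "spec_norm (That - T) \<le> \<Delta>T"
    and "norm (ph - p) \<le> \<Delta>p"
    and "norm (qh - q) \<le> \<Delta>q"
    and minimizer: "\<forall>\<theta>'. norm (That *v \<theta>h - qh + ph) + \<Delta>T * norm \<theta>h
                         \<le> norm (That *v \<theta>' - qh + ph) + \<Delta>T * norm \<theta>'"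
  shows "norm (\<theta>h - \<theta>) \<le> 2 * spec_norm (pinv T) * (\<Delta>q + \<Delta>p + \<theta>max * \<Delta>T)"
proof -
  have "norm (T *v (\<theta>h - \<theta>)) \<le> 2 * (\<Delta>T * norm \<theta> + (\<Delta>q + \<Delta>p))"
    using penalized_minimizer_error[where r = "\<lambda>v. That *v v - qh + ph",
        OF matrix_vector_mul_linear perturbed_residual_bound[OF eq assms(7-9)]] minimizer
    by simp
  also have "\<dots> \<le> 2 * (\<Delta>q + \<Delta>p + \<theta>max * \<Delta>T)"
    using mult_left_mono[OF theta_bound \<open>\<Delta>T \<ge> 0\<close>] by (simp add: mult.commute)
  finally have image_error: "norm (T *v (\<theta>h - \<theta>)) \<le> 2 * (\<Delta>q + \<Delta>p + \<theta>max * \<Delta>T)" .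
  have "inj ((*v) T)" using full_rank full_rank_injective by blast
  then have "norm (\<theta>h - \<theta>) \<le> spec_norm (pinv T) * norm (T *v (\<theta>h - \<theta>))"
    by (rule norm_le_spec_norm_pinv_mult)
  also have "\<dots> \<le> spec_norm (pinv T) * (2 * (\<Delta>q + \<Delta>p + \<theta>max * \<Delta>T))"
    using image_error spec_norm_nonneg by (rule mult_left_mono)
  finally show ?thesis by (simp add: mult.assoc mult.left_commute)
qed

end
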